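(* $\chi=\mathbb E[|X(-J,-1)|]$ satisfies $1\le\chi\le2$. Moreover, $\chi=2$ if and only if $\lim_{n\to\infty}\mathbb E[\mathcal C(-n,-1)\mathbbm 1_{J>n}]=0$.
   Context: Fix an integer $k\ge 2$ and $p\in[0,1]$. Let $\Theta=\{b_1,\dots,b_k,o_1,\dots,o_k,F\}$, where $b_i$ is a burger of type $i$, $o_i$ is an order of type $i$, and $F$ is a flexible order. Words in $\Theta$ are considered modulo the relations $b_io_i=b_iF=\varnothing$ and $b_io_j=o_jb_i$ for $i\ne j$; $\overline W$ denotes the reduced form of $W$ and $|W|$ its length. In the reduction, each $o_i$ consumes the most recent not-yet-consumed $b_i$ to its left, each $F$ consumes the most recent not-yet-consumed burger of any type to its left, and the reduced word lists the unconsumed orders followed by the unconsumed burgers. Let $(X(n))_{n\in\mathbb Z}$ be i.i.d. with $\mathbb P(X(n)=b_i)=\frac1{2k}$, $\mathbb P(X(n)=o_i)=\frac{1-p}{2k}$ and $\mathbb P(X(n)=F)=\frac p2$. For $m\le n$, set $X(m,n)=\overline{X(m)\cdots X(n)}$. For a word $W$, $\mathcal C(W)$ is the number of burgers minus the number of orders in $W$, and $\mathcal C(m,n)=\mathcal C(X(m,n))$. Let $J$ be the smallest positive integer such that $X(-J,-1)$ contains exactly one burger. *)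

theory Defs
  imports "HOL-Probability.Probability"
begin

text \<open>Symbols: Bg i = burger of type i, Od i = order of type i, Fl = flexible order.
  Types are indexed by i in {0..<k}.\<close>
datatype sym = Bg nat | Od nat | Fl

fun is_burger :: "sym \<Rightarrow> bool" where
  "is_burger (Bg _) = True"
| "is_burger _ = False"

text \<open>One step of the left-to-right reduction. State: (unconsumed orders in order of
  appearance, stack of unconsumed burgers with the most recent first).\<close>
fun red_step :: "sym list \<times> sym list \<Rightarrow> sym \<Rightarrow> sym list \<times> sym list" where
  "red_step (os, bs) (Bg i) = (os, Bg i # bs)"
| "red_step (os, bs) (Od i) =
     (if Bg i \<in> set bs then (os, remove1 (Bg i) bs) else (os @ [Od i], bs))"
| "red_step (os, bs) Fl = (case bs of [] \<Rightarrow> (os @ [Fl], []) | _ # bs' \<Rightarrow> (os, bs'))"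

definition reduce :: "sym list \<Rightarrow> sym list" where
  "reduce w = (case foldl red_step ([], []) w of (os, bs) \<Rightarrow> os @ rev bs)"

definition num_burgers :: "sym list \<Rightarrow> nat" where
  "num_burgers w = length (filter is_burger w)"

definition num_orders :: "sym list \<Rightarrow> nat" where
  "num_orders w = length (filter (\<lambda>s. \<not> is_burger s) w)"

definition Cnt :: "sym list \<Rightarrow> int" where
  "Cnt w = int (num_burgers w) - int (num_orders w)"

definition sym_weight :: "nat \<Rightarrow> real \<Rightarrow> sym \<Rightarrow> real" where
  "sym_weight k p s = (case s of
       Bg i \<Rightarrow> if i < k then 1 / (2 * real k) else 0
     | Od i \<Rightarrow> if i < k then (1 - p) / (2 * real k) else 0
     | Fl \<Rightarrow> p / 2)"

definition sym_pmf :: "nat \<Rightarrow> real \<Rightarrow> sym pmf" where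
  "sym_pmf k p = embed_pmf (sym_weight k p)"

text \<open>The i.i.d. sequence (X(-1), X(-2), ...) : omega j represents X(-(j+1)).\<close>
definition Xspace :: "nat \<Rightarrow> real \<Rightarrow> (nat \<Rightarrow> sym) measure" where
  "Xspace k p = PiM UNIV (\<lambda>_. measure_pmf (sym_pmf k p))"

text \<open>The word X(-m) X(-m+1) ... X(-1).\<close>
definition Xword :: "(nat \<Rightarrow> sym) \<Rightarrow> nat \<Rightarrow> sym list" where
  "Xword \<omega> m = rev (map \<omega> [0..<m])"

definition Xred :: "(nat \<Rightarrow> sym) \<Rightarrow> nat \<Rightarrow> sym list" where
  "Xred \<omega> m = reduce (Xword \<omega> m)"

definition Jtime :: "(nat \<Rightarrow> sym) \<Rightarrow> enat" where
  "Jtime \<omega> = (if \<exists>m>0. num_burgers (Xred \<omega> m) = 1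
     then enat (LEAST m. m > 0 \<and> num_burgers (Xred \<omega> m) = 1) else \<infinity>)"

definition chi :: "nat \<Rightarrow> real \<Rightarrow> ennreal" where
  "chi k p = (\<integral>\<^sup>+ \<omega>. (case Jtime \<omega> of enat m \<Rightarrow> ennreal (real (length (Xred \<omega> m))) | \<infinity> \<Rightarrow> 0)
                 \<partial>Xspace k p)"

end

theory Submission
  imports Defs
begin

text \<open>Reduction preserves the count, so \<open>n \<mapsto> C(-n,-1)\<close> is a simple random walk: every symbol
  contributes \<open>+1\<close> or \<open>-1\<close>, with mean zero. Prepending a symbol adds at most one burger to a reduced
  word, so the number of burgers in \<open>X(-n,-1)\<close> reaches \<open>1\<close> no later than the walk does, and
  \<open>J < \<infinity>\<close> almost surely by recurrence of the walk (gambler's ruin with the quadratic martingale).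
  At time \<open>J\<close> the reduced word has exactly one burger, so \<open>C(-J,-1) = 2 - |X(-J,-1)|\<close>, and optional
  stopping at \<open>min J n\<close> gives
  \<open>E[|X(-J,-1)|; J \<le> n] = 2 P(J \<le> n) + E[C(-n,-1); J > n]\<close>.
  The left side increases to \<open>\<chi>\<close>, the probability tends to \<open>1\<close>, the last term is nonpositive
  because \<open>X(-n,-1)\<close> contains no burger before time \<open>J\<close>, and \<open>|X(-J,-1)| \<ge> 1\<close>.\<close>

lemma SUP_ennreal_increasing_decomposition:
  fixes a q c :: "nat \<Rightarrow> real"
  assumes a_mono: "incseq a" and q_lim: "q \<longlonglongrightarrow> 1"
    and a_eq: "\<And>n. a n = 2 * q n + c n" and q_le_a: "\<And>n. q n \<le> a n" and c_nonpos: "\<And>n. c n \<le> 0"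
  shows "1 \<le> (SUP n. ennreal (a n)) \<and> (SUP n. ennreal (a n)) \<le> 2 \<and>
    ((SUP n. ennreal (a n)) = 2 \<longleftrightarrow> c \<longlonglongrightarrow> 0)"
proof -
  have a_le_2: "a n \<le> 2" for n
  proof (rule LIMSEQ_le_const)
    show "(\<lambda>m. 2 * q m) \<longlonglongrightarrow> 2"
      using tendsto_mult_left[OF q_lim, of 2] by simp
    show "\<exists>N. \<forall>m\<ge>N. a n \<le> 2 * q m"
      using a_mono a_eq c_nonpos by (metis add_le_same_cancel1 incseqD order_trans)
  qed
  obtain A where A: "a \<longlonglongrightarrow> A"
    using incseq_convergent[OF a_mono, of 2] a_le_2 by blast
  have "(\<lambda>n. ennreal (a n)) \<longlonglongrightarrow> (SUP n. ennreal (a n))"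
    using a_mono by (intro LIMSEQ_SUP) (auto simp: incseq_def intro: ennreal_leI)
  then have SUP_eq: "(SUP n. ennreal (a n)) = ennreal A"
    using tendsto_ennrealI[OF A] by (rule LIMSEQ_unique)
  have "1 \<le> A"
    using LIMSEQ_le[OF q_lim A] q_le_a by blast
  moreover have "A \<le> 2"
    using A a_le_2 by (intro LIMSEQ_le_const2) auto
  moreover have "c \<longlonglongrightarrow> A - 2 * 1"
    using tendsto_diff[OF A tendsto_mult_left[OF q_lim, of 2]] a_eq by (simp add: algebra_simps)
  then have "A = 2 \<longleftrightarrow> c \<longlonglongrightarrow> 0"
    using LIMSEQ_unique by fastforce
  moreover have "ennreal A = 2 \<longleftrightarrow> A = 2"
    using \<open>1 \<le> A\<close> ennreal_inj[of A 2] by (simp add: ennreal_numeral[symmetric] del: ennreal_numeral)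
  ultimately show ?thesis
    unfolding SUP_eq by (simp add: ennreal_leI[of A 2, simplified])
qed

section \<open>Finitely supported i.i.d. lists and sequences\<close>

lemma integral_bind_pmf_finite:
  fixes f :: "'b \<Rightarrow> real"
  assumes "finite (set_pmf M)" and "\<And>x. x \<in> set_pmf M \<Longrightarrow> finite (set_pmf (N x))"
  shows "measure_pmf.expectation (bind_pmf M N) f =
    measure_pmf.expectation M (\<lambda>x. measure_pmf.expectation (N x) f)"
proof -
  define A where "A = (\<Union>x\<in>set_pmf M. set_pmf (N x))"
  have A: "finite A"
    unfolding A_def using assms by (intro finite_UN_I) auto
  have expectation_N: "measure_pmf.expectation (N x) f = (\<Sum>a\<in>A. f a * pmf (N x) a)"
    if "x \<in> set_pmf M" for x
    using that by (intro integral_measure_pmf_real[OF A]) (auto simp: A_def)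
  have "measure_pmf.expectation (bind_pmf M N) f = (\<Sum>a\<in>A. f a * pmf (bind_pmf M N) a)"
    by (rule integral_measure_pmf_real[OF A]) (auto simp: A_def)
  also have "\<dots> = (\<Sum>a\<in>A. f a * (\<Sum>x\<in>set_pmf M. pmf (N x) a * pmf M x))"
    unfolding pmf_bind by (subst integral_measure_pmf_real[OF assms(1)]) auto
  also have "\<dots> = (\<Sum>x\<in>set_pmf M. (\<Sum>a\<in>A. f a * pmf (N x) a) * pmf M x)"
    by (simp add: sum_distrib_left sum_distrib_right mult.assoc) (rule sum.swap)
  also have "\<dots> = (\<Sum>x\<in>set_pmf M. measure_pmf.expectation (N x) f * pmf M x)"
    by (simp add: expectation_N)
  also have "\<dots> = measure_pmf.expectation M (\<lambda>x. measure_pmf.expectation (N x) f)"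
    by (rule integral_measure_pmf_real[symmetric]) (auto simp: assms(1))
  finally show ?thesis .
qed

lemma replicate_pmf_Suc_snoc:
  "replicate_pmf (Suc n) \<mu> = bind_pmf (replicate_pmf n \<mu>) (\<lambda>ys. map_pmf (\<lambda>x. ys @ [x]) \<mu>)"
  using replicate_pmf_distrib[of n 1 \<mu>]
  by (simp add: replicate_pmf_1 map_pmf_def bind_assoc_pmf bind_return_pmf)

lemma finite_set_replicate_pmf:
  "finite (set_pmf \<mu>) \<Longrightarrow> finite (set_pmf (replicate_pmf n \<mu>))"
  using finite_lists_length_eq[of "set_pmf \<mu>" n] by (simp add: set_replicate_pmf lists_eq_set)

lemma expectation_replicate_pmf_Suc:
  fixes F :: "'a list \<Rightarrow> real"
  assumes "finite (set_pmf \<mu>)"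
  shows "measure_pmf.expectation (replicate_pmf (Suc n) \<mu>) F =
    measure_pmf.expectation (replicate_pmf n \<mu>) (\<lambda>ys. measure_pmf.expectation \<mu> (\<lambda>x. F (ys @ [x])))"
  unfolding replicate_pmf_Suc_snoc
  by (simp add: integral_bind_pmf_finite finite_set_replicate_pmf assms)

lemma expectation_replicate_pmf_Suc_mono:
  fixes F :: "'a list \<Rightarrow> real"
  assumes "finite (set_pmf \<mu>)" and "\<And>ys x. F ys \<le> F (ys @ [x])"
  shows "measure_pmf.expectation (replicate_pmf n \<mu>) F \<le>
    measure_pmf.expectation (replicate_pmf (Suc n) \<mu>) F"
proof -
  have "measure_pmf.expectation (replicate_pmf n \<mu>) F =
      measure_pmf.expectation (replicate_pmf n \<mu>) (\<lambda>ys. measure_pmf.expectation \<mu> (\<lambda>_. F ys))"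
    by simp
  also have "\<dots> \<le> measure_pmf.expectation (replicate_pmf n \<mu>)
      (\<lambda>ys. measure_pmf.expectation \<mu> (\<lambda>x. F (ys @ [x])))"
    using assms by (intro integral_mono) (simp_all add: integrable_measure_pmf_finite finite_set_replicate_pmf)
  also have "\<dots> = measure_pmf.expectation (replicate_pmf (Suc n) \<mu>) F"
    by (rule expectation_replicate_pmf_Suc[OF assms(1), symmetric])
  finally show ?thesis .
qed

lemma pmf_replicate_pmf:
  "pmf (replicate_pmf n \<mu>) ys = (if length ys = n then (\<Prod>i<n. pmf \<mu> (ys ! i)) else 0)"
proof (induction n arbitrary: ys)
  case 0
  then show ?case by (simp add: pmf_return)
next
  case (Suc n)
  have pmf_Suc: "pmf (replicate_pmf (Suc n) \<mu>) ys =
      (\<integral>x. pmf (map_pmf ((#) x) (replicate_pmf n \<mu>)) ys \<partial>\<mu>)"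
    by (simp add: pmf_bind map_pmf_def[symmetric])
  show ?case
  proof (cases ys)
    case (Cons y zs)
    have "pmf (map_pmf ((#) x) (replicate_pmf n \<mu>)) (y # zs) =
        indicator {y} x * pmf (replicate_pmf n \<mu>) zs" for x
      by (cases "x = y") (auto simp: pmf_map_inj' pmf_eq_0_set_pmf)
    then have "pmf (replicate_pmf (Suc n) \<mu>) ys = pmf \<mu> y * pmf (replicate_pmf n \<mu>) zs"
      unfolding pmf_Suc by (simp add: Cons measure_pmf_single)
    then show ?thesis
      by (simp add: Suc.IH Cons prod.lessThan_Suc_shift del: prod.lessThan_Suc replicate_pmf.simps)
  qed (auto simp: pmf_eq_0_set_pmf set_replicate_pmf)
qed

lemma of_bool_square: "(of_bool b :: 'a::comm_semiring_1)\<^sup>2 = of_bool b"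
  by (cases b) simp_all

lemma prob_eq_expectation_of_bool:
  "measure_pmf.prob M {x. P x} = measure_pmf.expectation M (\<lambda>x. of_bool (P x))"
proof -
  have "(\<lambda>x. of_bool (P x)) = (indicator {x. P x} :: 'a \<Rightarrow> real)"
    by (auto simp: indicator_def)
  then show ?thesis by simp
qed

definition seq_prefix :: "(nat \<Rightarrow> 'a) \<Rightarrow> nat \<Rightarrow> 'a list" where
  "seq_prefix \<omega> n = map \<omega> [0..<n]"

lemma length_seq_prefix [simp]: "length (seq_prefix \<omega> n) = n"
  by (simp add: seq_prefix_def)

lemma take_seq_prefix: "m \<le> n \<Longrightarrow> take m (seq_prefix \<omega> n) = seq_prefix \<omega> m"
  by (simp add: seq_prefix_def take_map)

lemma seq_prefix_Suc: "seq_prefix \<omega> (Suc n) = seq_prefix \<omega> n @ [\<omega> n]"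
  by (simp add: seq_prefix_def)

lemma seq_prefix_cylinder:
  assumes "length ys = n"
  shows "{\<omega>. seq_prefix \<omega> n = ys} =
    prod_emb UNIV (\<lambda>_. measure_pmf \<mu>) {..<n} (\<Pi>\<^sub>E i\<in>{..<n}. {ys ! i})"
proof -
  have "seq_prefix \<omega> n = ys \<longleftrightarrow> (\<forall>i<n. \<omega> i = ys ! i)" for \<omega> :: "nat \<Rightarrow> 'a"
    using assms by (auto simp: seq_prefix_def list_eq_iff_nth_eq)
  then show ?thesis
    by (auto simp: prod_emb_def space_PiM restrict_PiE_iff)
qed

lemma sets_seq_prefix_eq:
  "{\<omega>. seq_prefix \<omega> n = ys} \<in> sets (PiM UNIV (\<lambda>_. measure_pmf \<mu>))"
proof (cases "length ys = n")
  case True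
  show ?thesis
    unfolding seq_prefix_cylinder[OF True, of \<mu>] by (rule sets_PiM_I) auto
next
  case False
  then have "{\<omega>. seq_prefix \<omega> n = ys} = {}"
    by (auto simp: seq_prefix_def)
  then show ?thesis by simp
qed

lemma measurable_seq_prefix:
  fixes \<mu> :: "'a::countable pmf"
  shows "(\<lambda>\<omega>. seq_prefix \<omega> n) \<in> PiM UNIV (\<lambda>_. measure_pmf \<mu>) \<rightarrow>\<^sub>M count_space UNIV"
  using sets_seq_prefix_eq[of n _ \<mu>]
  by (subst measurable_count_space_eq_countable) (auto simp: space_PiM vimage_def)

lemma emeasure_seq_prefix:
  "emeasure (PiM UNIV (\<lambda>_. measure_pmf \<mu>)) {\<omega>. seq_prefix \<omega> n = ys} = pmf (replicate_pmf n \<mu>) ys"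
proof (cases "length ys = n")
  case True
  have "emeasure (PiM UNIV (\<lambda>_. measure_pmf \<mu>)) {\<omega>. seq_prefix \<omega> n = ys} =
      (\<Prod>i<n. emeasure (measure_pmf \<mu>) {ys ! i})"
    unfolding seq_prefix_cylinder[OF True, of \<mu>]
    by (rule emeasure_PiM_emb) (auto simp: prob_space_measure_pmf)
  then show ?thesis
    using True by (simp add: pmf_replicate_pmf emeasure_pmf_single prod_ennreal)
next
  case False
  then have "{\<omega>. seq_prefix \<omega> n = ys} = {}"
    by (auto simp: seq_prefix_def)
  with False show ?thesis
    by (simp add: pmf_replicate_pmf)
qed

lemma distr_seq_prefix:
  "distr (PiM UNIV (\<lambda>_. measure_pmf \<mu>)) (count_space UNIV) (\<lambda>\<omega>. seq_prefix \<omega> n) =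
    measure_pmf (replicate_pmf n (\<mu> :: 'a::countable pmf))"
proof (rule measure_eqI_countable[where A = UNIV])
  fix ys :: "'a list"
  have "(\<lambda>\<omega>. seq_prefix \<omega> n) -` {ys} \<inter> space (PiM UNIV (\<lambda>_. measure_pmf \<mu>)) = {\<omega>. seq_prefix \<omega> n = ys}"
    by (auto simp: space_PiM)
  then show "emeasure (distr (PiM UNIV (\<lambda>_. measure_pmf \<mu>)) (count_space UNIV) (\<lambda>\<omega>. seq_prefix \<omega> n)) {ys} =
      emeasure (measure_pmf (replicate_pmf n \<mu>)) {ys}"
    by (simp add: emeasure_distr measurable_seq_prefix emeasure_seq_prefix emeasure_pmf_single)
qed simp_all

lemma integral_seq_prefix:
  fixes F :: "'a::countable list \<Rightarrow> real"
  shows "(\<integral>\<omega>. F (seq_prefix \<omega> n) \<partial>PiM UNIV (\<lambda>_. measure_pmf \<mu>)) =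
    measure_pmf.expectation (replicate_pmf n \<mu>) F"
  by (subst distr_seq_prefix[symmetric]) (simp add: integral_distr measurable_seq_prefix)

lemma nn_integral_seq_prefix:
  fixes F :: "'a::countable list \<Rightarrow> ennreal"
  shows "(\<integral>\<^sup>+\<omega>. F (seq_prefix \<omega> n) \<partial>PiM UNIV (\<lambda>_. measure_pmf \<mu>)) =
    (\<integral>\<^sup>+ys. F ys \<partial>replicate_pmf n \<mu>)"
  by (subst distr_seq_prefix[symmetric]) (simp add: nn_integral_distr measurable_seq_prefix)

definition hits :: "('a list \<Rightarrow> bool) \<Rightarrow> 'a list \<Rightarrow> bool" where
  "hits Q ys \<longleftrightarrow> (\<exists>m\<le>length ys. Q (take m ys))"

text \<open>\<open>stop_time Q ys\<close> is \<open>min \<tau> n\<close> for the hitting time \<open>\<tau>\<close> of \<open>Q\<close> along the prefixes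
  of a list of length \<open>n\<close>.\<close>

definition stop_time :: "('a list \<Rightarrow> bool) \<Rightarrow> 'a list \<Rightarrow> nat" where
  "stop_time Q ys = (LEAST m. m = length ys \<or> Q (take m ys))"

lemma stop_time_le_length: "stop_time Q ys \<le> length ys"
  unfolding stop_time_def by (rule Least_le) simp

lemma stop_time_minimal: "m < stop_time Q ys \<Longrightarrow> \<not> Q (take m ys)"
  unfolding stop_time_def using not_less_Least by blast

lemma stop_time_cases: "stop_time Q ys = length ys \<or> Q (take (stop_time Q ys) ys)"
  unfolding stop_time_def by (rule LeastI[of _ "length ys"]) simp

lemma hits_iff_stop_time: "hits Q ys \<longleftrightarrow> Q (take (stop_time Q ys) ys)"
proof
  assume "hits Q ys"
  then obtain m where "m \<le> length ys" "Q (take m ys)"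
    by (auto simp: hits_def)
  with stop_time_minimal[of m Q ys] stop_time_cases[of Q ys] stop_time_le_length[of Q ys]
  show "Q (take (stop_time Q ys) ys)"
    by (metis le_antisym not_less)
qed (use stop_time_le_length in \<open>auto simp: hits_def\<close>)

lemma stop_time_not_hits: "\<not> hits Q ys \<Longrightarrow> stop_time Q ys = length ys"
  using stop_time_cases[of Q ys] by (simp add: hits_iff_stop_time)

lemma hits_snoc: "hits Q (ys @ [x]) \<longleftrightarrow> hits Q ys \<or> Q (ys @ [x])"
  by (auto simp: hits_def le_Suc_eq)

lemma hits_take:
  assumes "hits Q (take m ys)"
  shows "hits Q ys"
proof -
  from assms obtain j where "j \<le> length (take m ys)" "Q (take j (take m ys))"
    by (auto simp: hits_def)
  then show ?thesis
    unfolding hits_def by (intro exI[of _ "min j m"]) auto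
qed

lemma stop_time_snoc:
  "stop_time Q (ys @ [x]) = (if hits Q ys then stop_time Q ys else Suc (length ys))"
proof (cases "hits Q ys")
  case True
  have "stop_time Q ys \<le> m" if "Q (take m (ys @ [x]))" for m
    using that stop_time_minimal[of m Q ys] stop_time_le_length[of Q ys]
    by (cases "m \<le> length ys") (auto intro: leI)
  with True show ?thesis
    using stop_time_le_length[of Q ys]
    unfolding stop_time_def[of Q "ys @ [x]"]
    by (intro Least_equality) (auto simp: hits_iff_stop_time)
next
  case False
  then have "\<not> Q (take m (ys @ [x]))" if "m \<le> length ys" for m
    using that by (auto simp: hits_def)
  with False show ?thesis
    unfolding stop_time_def[of Q "ys @ [x]"]
    by (intro Least_equality) (auto simp: not_less_eq_eq[symmetric])
qed

lemma hits_seq_prefix: "hits Q (seq_prefix \<omega> n) \<longleftrightarrow> (\<exists>m\<le>n. Q (seq_prefix \<omega> m))"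
  by (auto simp: hits_def take_seq_prefix)

lemma stop_time_seq_prefix:
  assumes "hits Q (seq_prefix \<omega> n)"
  shows "stop_time Q (seq_prefix \<omega> n) = (LEAST m. Q (seq_prefix \<omega> m))"
proof -
  obtain m0 where m0: "m0 \<le> n" "Q (seq_prefix \<omega> m0)"
    using assms by (auto simp: hits_seq_prefix)
  define L where "L = (LEAST m. Q (seq_prefix \<omega> m))"
  have L: "L \<le> m0" "Q (seq_prefix \<omega> L)"
    using m0(2) unfolding L_def by (auto intro: Least_le LeastI)
  have "L \<le> y" if "y = n \<or> Q (take y (seq_prefix \<omega> n))" for y
    using that L m0(1) by (cases "y \<le> n") (auto simp: L_def take_seq_prefix intro: Least_le)
  then show ?thesis
    unfolding stop_time_def L_def[symmetric] using L m0(1)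
    by (intro Least_equality) (auto simp: take_seq_prefix)
qed

section \<open>Stopped simple random walks\<close>

locale pm1_walk =
  fixes \<mu> :: "'a pmf" and d :: "'a \<Rightarrow> int"
  assumes finite_support: "finite (set_pmf \<mu>)"
    and step_pm1: "\<And>x. d x = 1 \<or> d x = -1"
    and mean_zero: "measure_pmf.expectation \<mu> (\<lambda>x. real_of_int (d x)) = 0"
begin

definition walk :: "'a list \<Rightarrow> int" where
  "walk ys = (\<Sum>x\<leftarrow>ys. d x)"

definition stopped_walk :: "('a list \<Rightarrow> bool) \<Rightarrow> 'a list \<Rightarrow> int" where
  "stopped_walk Q ys = walk (take (stop_time Q ys) ys)"

lemma walk_snoc [simp]: "walk (ys @ [x]) = walk ys + d x"
  by (simp add: walk_def)

lemma stopped_walk_snoc: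
  "stopped_walk Q (ys @ [x]) = stopped_walk Q ys + (if hits Q ys then 0 else d x)"
  using stop_time_le_length[of Q ys]
  by (auto simp: stopped_walk_def stop_time_snoc stop_time_not_hits)

lemma integrable_replicate_pmf [simp]:
  "integrable (measure_pmf (replicate_pmf n \<mu>)) (f :: 'a list \<Rightarrow> real)"
  by (simp add: integrable_measure_pmf_finite finite_set_replicate_pmf finite_support)

lemma integrable_step_pmf [simp]: "integrable (measure_pmf \<mu>) (f :: 'a \<Rightarrow> real)"
  by (simp add: integrable_measure_pmf_finite finite_support)

lemma expectation_affine_step:
  "measure_pmf.expectation \<mu> (\<lambda>x. a + b * real_of_int (d x)) = a"
  using mean_zero by simp

lemma expectation_affine_step_sq:
  "measure_pmf.expectation \<mu> (\<lambda>x. (a + b * real_of_int (d x))\<^sup>2) = a\<^sup>2 + b\<^sup>2"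
proof -
  have "(a + b * real_of_int (d x))\<^sup>2 = (a\<^sup>2 + b\<^sup>2) + (2 * a * b) * real_of_int (d x)" for x
    using step_pm1[of x] by (auto simp: power2_eq_square algebra_simps)
  then show ?thesis
    by (simp add: expectation_affine_step)
qed

lemma expectation_snoc_stopped_walk:
  fixes f :: "real \<Rightarrow> real"
  shows "measure_pmf.expectation (replicate_pmf (Suc n) \<mu>) (\<lambda>ys. f (real_of_int (stopped_walk Q ys))) =
   measure_pmf.expectation (replicate_pmf n \<mu>) (\<lambda>ys. measure_pmf.expectation \<mu>
     (\<lambda>x. f (real_of_int (stopped_walk Q ys) + of_bool (\<not> hits Q ys) * real_of_int (d x))))"
  by (subst expectation_replicate_pmf_Suc[OF finite_support])
     (intro Bochner_Integration.integral_cong refl, simp add: stopped_walk_snoc)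

lemma expectation_stopped_walk:
  "measure_pmf.expectation (replicate_pmf n \<mu>) (\<lambda>ys. real_of_int (stopped_walk Q ys)) = 0"
proof (induction n)
  case (Suc n)
  then show ?case
    using expectation_snoc_stopped_walk[of n "\<lambda>t. t"] by (simp add: expectation_affine_step)
qed (simp add: stopped_walk_def walk_def)

lemma expectation_stopped_walk_sq:
  "measure_pmf.expectation (replicate_pmf n \<mu>) (\<lambda>ys. (real_of_int (stopped_walk Q ys))\<^sup>2) =
   (\<Sum>m<n. measure_pmf.prob (replicate_pmf m \<mu>) {ys. \<not> hits Q ys})"
proof (induction n)
  case (Suc n)
  have "measure_pmf.expectation (replicate_pmf (Suc n) \<mu>) (\<lambda>ys. (real_of_int (stopped_walk Q ys))\<^sup>2) =
      measure_pmf.expectation (replicate_pmf n \<mu>)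
        (\<lambda>ys. (real_of_int (stopped_walk Q ys))\<^sup>2 + of_bool (\<not> hits Q ys))"
    using expectation_snoc_stopped_walk[of n "\<lambda>t. t\<^sup>2"] of_bool_square[where 'a = real]
    by (simp add: expectation_affine_step_sq del: replicate_pmf.simps)
  also have "\<dots> = measure_pmf.expectation (replicate_pmf n \<mu>) (\<lambda>ys. (real_of_int (stopped_walk Q ys))\<^sup>2)
      + measure_pmf.prob (replicate_pmf n \<mu>) {ys. \<not> hits Q ys}"
    by (simp add: prob_eq_expectation_of_bool)
  finally show ?case
    using Suc by simp
qed (simp add: stopped_walk_def walk_def)

lemma prob_not_hits_Suc_le:
  "measure_pmf.prob (replicate_pmf (Suc n) \<mu>) {ys. \<not> hits Q ys} \<le>
   measure_pmf.prob (replicate_pmf n \<mu>) {ys. \<not> hits Q ys}"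
proof -
  have "measure_pmf.prob (replicate_pmf (Suc n) \<mu>) {ys. \<not> hits Q ys} =
      measure_pmf.expectation (replicate_pmf n \<mu>)
        (\<lambda>ys. measure_pmf.expectation \<mu> (\<lambda>x. of_bool (\<not> hits Q (ys @ [x]))))"
    unfolding prob_eq_expectation_of_bool by (rule expectation_replicate_pmf_Suc[OF finite_support])
  also have "\<dots> \<le> measure_pmf.expectation (replicate_pmf n \<mu>) (\<lambda>ys. of_bool (\<not> hits Q ys))"
  proof (intro integral_mono)
    fix ys
    show "measure_pmf.expectation \<mu> (\<lambda>x. of_bool (\<not> hits Q (ys @ [x]))) \<le> (of_bool (\<not> hits Q ys) :: real)"
      using measure_pmf.prob_le_1[of \<mu> "{x. \<not> hits Q (ys @ [x])}"]
      by (cases "hits Q ys") (simp_all add: hits_snoc prob_eq_expectation_of_bool)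
  qed simp_all
  finally show ?thesis
    by (simp add: prob_eq_expectation_of_bool)
qed

lemma prob_not_hits_antimono:
  "m \<le> n \<Longrightarrow> measure_pmf.prob (replicate_pmf n \<mu>) {ys. \<not> hits Q ys} \<le>
    measure_pmf.prob (replicate_pmf m \<mu>) {ys. \<not> hits Q ys}"
  by (induction n rule: dec_induct) (auto intro: order_trans[OF prob_not_hits_Suc_le] simp del: replicate_pmf.simps)

lemma prob_not_hits_le:
  assumes "\<And>ys. \<bar>real_of_int (stopped_walk Q ys)\<bar> \<le> B"
  shows "real n * measure_pmf.prob (replicate_pmf n \<mu>) {ys. \<not> hits Q ys} \<le> B\<^sup>2"
proof -
  have "real n * measure_pmf.prob (replicate_pmf n \<mu>) {ys. \<not> hits Q ys} =
      (\<Sum>m<n. measure_pmf.prob (replicate_pmf n \<mu>) {ys. \<not> hits Q ys})"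
    by simp
  also have "\<dots> \<le> (\<Sum>m<n. measure_pmf.prob (replicate_pmf m \<mu>) {ys. \<not> hits Q ys})"
    by (intro sum_mono prob_not_hits_antimono) simp
  also have "\<dots> = measure_pmf.expectation (replicate_pmf n \<mu>) (\<lambda>ys. (real_of_int (stopped_walk Q ys))\<^sup>2)"
    by (rule expectation_stopped_walk_sq[symmetric])
  also have "\<dots> \<le> measure_pmf.expectation (replicate_pmf n \<mu>) (\<lambda>_. B\<^sup>2)"
    using assms by (intro integral_mono) (simp_all, metis abs_ge_zero power2_abs power_mono)
  finally show ?thesis
    by simp
qed

lemma walk_bounded_before_exit:
  assumes "\<not> hits (\<lambda>zs. walk zs = 1 \<or> walk zs = - int M) ys"
  shows "- int M < walk ys \<and> walk ys < 1"
  using assms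
proof (induction ys rule: rev_induct)
  case (snoc x ys)
  then show ?case
    using step_pm1[of x] by (auto simp: hits_snoc)
qed (simp add: hits_def walk_def)

lemma stopped_walk_le_exit_indicators:
  fixes M :: nat
  defines "Q \<equiv> \<lambda>zs. walk zs = 1 \<or> walk zs = - int M"
  shows "real_of_int (stopped_walk Q ys) \<le>
    (real M + 1) * of_bool (hits (\<lambda>zs. walk zs = 1) ys) - real M * of_bool (hits Q ys)"
proof (cases "hits Q ys")
  case True
  then have "Q (take (stop_time Q ys) ys)"
    by (simp add: hits_iff_stop_time)
  moreover have "walk (take (stop_time Q ys) ys) = 1 \<Longrightarrow> hits (\<lambda>zs. walk zs = 1) ys"
    using stop_time_le_length[of Q ys] by (auto simp: hits_def)
  ultimately show ?thesis
    using True by (auto simp: Q_def stopped_walk_def)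
next
  case False
  then have "\<not> hits (\<lambda>zs. walk zs = 1) ys"
    by (auto simp: hits_def Q_def)
  with False walk_bounded_before_exit[of M ys] show ?thesis
    by (simp add: Q_def stopped_walk_def stop_time_not_hits)
qed

lemma abs_stopped_walk_exit_le:
  assumes "1 \<le> M"
  shows "\<bar>real_of_int (stopped_walk (\<lambda>zs. walk zs = 1 \<or> walk zs = - int M) ys)\<bar> \<le> real M"
proof (cases "hits (\<lambda>zs. walk zs = 1 \<or> walk zs = - int M) ys")
  case True
  then show ?thesis
    using assms by (auto simp: stopped_walk_def hits_iff_stop_time)
next
  case False
  then show ?thesis
    using walk_bounded_before_exit[of M ys] by (simp add: stopped_walk_def stop_time_not_hits)
qed

text \<open>Gambler's ruin: stop the walk when it leaves \<open>(-M, 1)\<close>. Optional stopping bounds the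
  probability of exiting through \<open>1\<close> from below by \<open>M/(M+1)\<close> times the probability of exiting at
  all, and the quadratic martingale bounds the probability of no exit before time \<open>n\<close> by \<open>M\<^sup>2/n\<close>.\<close>

lemma prob_hits_one_lower_bound:
  assumes "1 \<le> M" and "0 < n"
  shows "real M / (real M + 1) * (1 - (real M)\<^sup>2 / real n) \<le>
    measure_pmf.prob (replicate_pmf n \<mu>) {ys. hits (\<lambda>zs. walk zs = 1) ys}"
proof -
  define Q where "Q = (\<lambda>zs. walk zs = 1 \<or> walk zs = - int M)"
  let ?P = "\<lambda>R. measure_pmf.prob (replicate_pmf n \<mu>) {ys. R ys}"
  have "0 = measure_pmf.expectation (replicate_pmf n \<mu>) (\<lambda>ys. real_of_int (stopped_walk Q ys))"
    by (rule expectation_stopped_walk[symmetric])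
  also have "\<dots> \<le> measure_pmf.expectation (replicate_pmf n \<mu>)
      (\<lambda>ys. (real M + 1) * of_bool (hits (\<lambda>zs. walk zs = 1) ys) - real M * of_bool (hits Q ys))"
    by (intro integral_mono) (simp_all add: stopped_walk_le_exit_indicators Q_def)
  also have "\<dots> = (real M + 1) * ?P (hits (\<lambda>zs. walk zs = 1)) - real M * (1 - ?P (\<lambda>ys. \<not> hits Q ys))"
    by (simp add: prob_eq_expectation_of_bool of_bool_not_iff)
  finally have "real M * (1 - ?P (\<lambda>ys. \<not> hits Q ys)) \<le> (real M + 1) * ?P (hits (\<lambda>zs. walk zs = 1))"
    by simp
  moreover have "?P (\<lambda>ys. \<not> hits Q ys) \<le> (real M)\<^sup>2 / real n"
    using prob_not_hits_le[of Q "real M" n] abs_stopped_walk_exit_le[OF assms(1)] assms(2)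
    by (simp add: Q_def field_simps)
  ultimately have "real M * (1 - (real M)\<^sup>2 / real n) \<le> (real M + 1) * ?P (hits (\<lambda>zs. walk zs = 1))"
    by (smt (verit) mult_left_mono of_nat_0_le_iff)
  then show ?thesis
    by (simp add: pos_divide_le_eq mult.commute)
qed

lemma prob_hits_one_tendsto:
  "(\<lambda>n. measure_pmf.prob (replicate_pmf n \<mu>) {ys. hits (\<lambda>zs. walk zs = 1) ys}) \<longlonglongrightarrow> 1"
proof (rule order_tendstoI)
  fix a :: real
  assume "a < 1"
  obtain N where "\<And>M. N \<le> M \<Longrightarrow> a < real M / real (Suc M)"
    using order_tendstoD(1)[OF LIMSEQ_n_over_Suc_n \<open>a < 1\<close>] by (auto simp: eventually_sequentially)
  then obtain M where M: "1 \<le> M" "a < real M / (real M + 1)"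
    using le_add2[of N 1] by (metis le_add1 of_nat_Suc add.commute)
  have "(\<lambda>n. real M / (real M + 1) * (1 - (real M)\<^sup>2 / real n)) \<longlonglongrightarrow> real M / (real M + 1) * (1 - 0)"
    by (intro tendsto_intros lim_const_over_n)
  then have "eventually (\<lambda>n. a < real M / (real M + 1) * (1 - (real M)\<^sup>2 / real n)) sequentially"
    using M(2) by (auto dest: order_tendstoD(1))
  moreover have "eventually (\<lambda>n. 0 < n) sequentially"
    by (rule eventually_gt_at_top)
  ultimately show "eventually (\<lambda>n. a < measure_pmf.prob (replicate_pmf n \<mu>) {ys. hits (\<lambda>zs. walk zs = 1) ys}) sequentially"
    by eventually_elim (use prob_hits_one_lower_bound[OF M(1)] in \<open>blast intro: order.strict_trans2\<close>)
next
  fix a :: real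
  assume "1 < a"
  then show "eventually (\<lambda>n. measure_pmf.prob (replicate_pmf n \<mu>) {ys. hits (\<lambda>zs. walk zs = 1) ys} < a) sequentially"
    by (intro always_eventually allI le_less_trans[OF measure_pmf.prob_le_1])
qed

end

section \<open>Reduction of burger words\<close>

instance sym :: countable
  by countable_datatype

definition burger_sign :: "sym \<Rightarrow> int" where
  "burger_sign s = (if is_burger s then 1 else -1)"

lemma num_burgers_simps [simp]:
  "num_burgers [] = 0"
  "num_burgers (s # w) = (if is_burger s then 1 else 0) + num_burgers w"
  "num_burgers (w @ v) = num_burgers w + num_burgers v"
  "num_burgers (rev w) = num_burgers w"
  by (simp_all add: num_burgers_def rev_filter[symmetric])

lemma num_orders_simps [simp]:
  "num_orders [] = 0"
  "num_orders (s # w) = (if is_burger s then 0 else 1) + num_orders w"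
  "num_orders (w @ v) = num_orders w + num_orders v"
  "num_orders (rev w) = num_orders w"
  by (simp_all add: num_orders_def rev_filter[symmetric])

lemma Cnt_simps [simp]:
  "Cnt [] = 0"
  "Cnt (s # w) = burger_sign s + Cnt w"
  "Cnt (w @ v) = Cnt w + Cnt v"
  "Cnt (rev w) = Cnt w"
  by (simp_all add: Cnt_def burger_sign_def)

lemma Cnt_eq_sum_list: "Cnt w = (\<Sum>s\<leftarrow>w. burger_sign s)"
  by (induction w) simp_all

lemma length_eq_num_burgers_add_num_orders: "length w = num_burgers w + num_orders w"
  by (induction w) simp_all

lemma Cnt_eq_num_burgers_length: "Cnt w = 2 * int (num_burgers w) - int (length w)"
  using length_eq_num_burgers_add_num_orders[of w] by (simp add: Cnt_def)

definition reduction_state :: "sym list \<times> sym list \<Rightarrow> bool" where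
  "reduction_state st \<longleftrightarrow> (\<forall>s\<in>set (fst st). \<not> is_burger s) \<and> (\<forall>s\<in>set (snd st). is_burger s)"

lemma reduction_state_red_step:
  "reduction_state st \<Longrightarrow> reduction_state (red_step st s)"
  by (cases st; cases s)
     (auto simp: reduction_state_def split: list.splits dest: set_remove1_subset[THEN subsetD])

lemma int_length_remove1: "x \<in> set xs \<Longrightarrow> int (length (remove1 x xs)) = int (length xs) - 1"
  by (induction xs) auto

lemma length_diff_red_step:
  assumes "reduction_state (os, bs)" and "red_step (os, bs) s = (os', bs')"
  shows "int (length bs') - int (length os') = int (length bs) - int (length os) + burger_sign s"
  using assms by (cases s) (auto simp: reduction_state_def burger_sign_def int_length_remove1 split: list.splits if_splits)

lemma reduction_state_foldl:
  assumes "reduction_state st"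
  shows "reduction_state (foldl red_step st w) \<and>
    int (length (snd (foldl red_step st w))) - int (length (fst (foldl red_step st w)))
      = int (length (snd st)) - int (length (fst st)) + Cnt w"
  using assms
proof (induction w arbitrary: st)
  case (Cons s w)
  obtain os bs where "st = (os, bs)" by fastforce
  with Cons length_diff_red_step[of os bs s] reduction_state_red_step[of st s] show ?case
    by (cases "red_step st s") simp
qed simp

lemma reduce_components:
  obtains os bs where "reduce w = os @ rev bs" and "snd (foldl red_step ([], []) w) = bs"
    and "\<forall>s\<in>set os. \<not> is_burger s" and "\<forall>s\<in>set bs. is_burger s"
    and "int (length bs) - int (length os) = Cnt w"
  using reduction_state_foldl[of "([], [])" w]
  by (cases "foldl red_step ([], []) w") (auto simp: reduce_def reduction_state_def)

lemma num_burgers_reduce: "num_burgers (reduce w) = length (snd (foldl red_step ([], []) w))"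
proof -
  obtain os bs where "reduce w = os @ rev bs" "snd (foldl red_step ([], []) w) = bs"
    "\<forall>s\<in>set os. \<not> is_burger s" "\<forall>s\<in>set bs. is_burger s"
    by (rule reduce_components)
  then show ?thesis by (simp add: num_burgers_def filter_empty_conv)
qed

lemma Cnt_reduce [simp]: "Cnt (reduce w) = Cnt w"
proof -
  obtain os bs where "reduce w = os @ rev bs" "\<forall>s\<in>set os. \<not> is_burger s" "\<forall>s\<in>set bs. is_burger s"
    "int (length bs) - int (length os) = Cnt w"
    by (rule reduce_components)
  then show ?thesis
    by (simp add: Cnt_def num_burgers_def num_orders_def filter_empty_conv)
qed

text \<open>Prepending a symbol to a word only inserts at most one burger into the burger stack of
  the reduction; this is what bounds the growth of the number of burgers in \<open>X(-n,-1)\<close>.\<close>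

definition inserts_at_most_one :: "'a list \<Rightarrow> 'a list \<Rightarrow> bool" where
  "inserts_at_most_one xs ys \<longleftrightarrow> ys = xs \<or> (\<exists>us vs z. xs = us @ vs \<and> ys = us @ z # vs)"

lemma inserts_at_most_one_refl: "inserts_at_most_one xs xs"
  by (simp add: inserts_at_most_one_def)

lemma inserts_at_most_one_length: "inserts_at_most_one xs ys \<Longrightarrow> length ys \<le> Suc (length xs)"
  by (auto simp: inserts_at_most_one_def)

lemma inserts_at_most_one_set: "inserts_at_most_one xs ys \<Longrightarrow> set xs \<subseteq> set ys"
  by (auto simp: inserts_at_most_one_def)

lemma inserts_at_most_one_append:
  "inserts_at_most_one xs ys \<Longrightarrow> inserts_at_most_one (us @ xs) (us @ ys)"
  unfolding inserts_at_most_one_def by (metis append.assoc)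

lemma inserts_at_most_one_Cons:
  "inserts_at_most_one xs ys \<Longrightarrow> inserts_at_most_one (x # xs) (x # ys)"
  using inserts_at_most_one_append[of xs ys "[x]"] by simp

lemma inserts_at_most_one_tl:
  assumes "inserts_at_most_one xs ys"
  shows "inserts_at_most_one (tl xs) (tl ys)"
proof -
  have "inserts_at_most_one (tl (us @ vs)) (tl (us @ z # vs))" for us vs :: "'a list" and z
  proof (cases us)
    case Nil
    then show ?thesis
      by (cases vs) (auto simp: inserts_at_most_one_def intro: exI[of _ "[]"])
  qed (auto simp: inserts_at_most_one_def)
  with assms show ?thesis
    by (auto simp: inserts_at_most_one_def)
qed

lemma inserts_at_most_one_remove1_left: "inserts_at_most_one (remove1 a xs) xs"
proof (cases "a \<in> set xs")
  case True
  then obtain us vs where "xs = us @ a # vs" "a \<notin> set us"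
    by (blast dest: split_list_first)
  then show ?thesis
    by (auto simp: inserts_at_most_one_def remove1_append)
qed (simp add: inserts_at_most_one_def remove1_idem)

lemma inserts_at_most_one_remove1:
  assumes "inserts_at_most_one xs ys"
  shows "inserts_at_most_one (remove1 a xs) (remove1 a ys)"
proof -
  have "inserts_at_most_one (remove1 a (us @ vs)) (remove1 a (us @ z # vs))" for us vs :: "'a list" and z
    using inserts_at_most_one_append[OF inserts_at_most_one_remove1_left, of us a vs]
    by (auto simp: inserts_at_most_one_def remove1_append)
  with assms show ?thesis
    by (auto simp: inserts_at_most_one_def)
qed

lemma inserts_at_most_one_remove1_right:
  assumes "inserts_at_most_one xs ys" and "a \<notin> set xs"
  shows "inserts_at_most_one xs (remove1 a ys)"
proof (cases "a \<in> set ys")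
  case True
  with assms obtain us vs where "xs = us @ vs" "ys = us @ a # vs"
    by (auto simp: inserts_at_most_one_def)
  with assms(2) show ?thesis
    by (simp add: remove1_append remove1_idem inserts_at_most_one_refl)
qed (use assms in \<open>simp add: remove1_idem\<close>)

lemma snd_red_step [simp]:
  "snd (red_step (os, bs) (Bg i)) = Bg i # bs"
  "snd (red_step (os, bs) (Od i)) = (if Bg i \<in> set bs then remove1 (Bg i) bs else bs)"
  "snd (red_step (os, bs) Fl) = tl bs"
  by (simp_all split: list.split)

lemma inserts_at_most_one_red_step:
  assumes "inserts_at_most_one bs bs'"
  shows "inserts_at_most_one (snd (red_step (os, bs) s)) (snd (red_step (os', bs') s))"
  using assms inserts_at_most_one_set[OF assms]
  by (cases s) (auto simp del: red_step.simps intro: inserts_at_most_one_Cons inserts_at_most_one_tl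
      inserts_at_most_one_remove1 inserts_at_most_one_remove1_right)

lemma inserts_at_most_one_foldl_red_step:
  "inserts_at_most_one bs bs' \<Longrightarrow>
   inserts_at_most_one (snd (foldl red_step (os, bs) w)) (snd (foldl red_step (os', bs') w))"
proof (induction w arbitrary: os bs os' bs')
  case (Cons s w)
  then show ?case
    using inserts_at_most_one_red_step[OF Cons.prems, of os s os']
    by (simp del: snd_red_step) (metis prod.collapse)
qed simp

lemma num_burgers_reduce_Cons_le: "num_burgers (reduce (s # w)) \<le> Suc (num_burgers (reduce w))"
proof -
  have "inserts_at_most_one [] (snd (red_step ([], []) s))"
    by (cases s) (simp_all add: inserts_at_most_one_def)
  from inserts_at_most_one_foldl_red_step[OF this, of "[]" w "fst (red_step ([], []) s)"]
  have "inserts_at_most_one (snd (foldl red_step ([], []) w)) (snd (foldl red_step ([], []) (s # w)))"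
    by simp
  then show ?thesis
    by (simp add: num_burgers_reduce inserts_at_most_one_length)
qed

section \<open>The time \<open>J\<close>\<close>

text \<open>Since \<open>\<omega> i\<close> stands for \<open>X(-(i+1))\<close>, \<open>seq_prefix \<omega> n\<close> lists \<open>X(-1), \<dots>, X(-n)\<close>
  and the word \<open>X(-n,-1)\<close> is its reverse.\<close>

definition one_burger :: "sym list \<Rightarrow> bool" where
  "one_burger ys \<longleftrightarrow> ys \<noteq> [] \<and> num_burgers (reduce (rev ys)) = 1"

lemma num_burgers_before_one_burger:
  "\<not> hits one_burger ys \<Longrightarrow> num_burgers (reduce (rev ys)) = 0"
proof (induction ys rule: rev_induct)
  case (snoc x ys)
  then have "num_burgers (reduce (rev ys)) = 0" and "\<not> one_burger (ys @ [x])"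
    by (auto simp: hits_snoc)
  then show ?case
    using num_burgers_reduce_Cons_le[of x "rev ys"] by (simp add: one_burger_def)
qed (simp add: reduce_def)

lemma hits_one_burger_if_hits_Cnt_one:
  assumes "hits (\<lambda>zs. Cnt zs = 1) ys"
  shows "hits one_burger ys"
proof -
  obtain m where "Cnt (take m ys) = 1"
    using assms by (auto simp: hits_def)
  then have "num_burgers (reduce (rev (take m ys))) \<noteq> 0"
    using Cnt_eq_num_burgers_length[of "reduce (rev (take m ys))"] by auto
  then have "hits one_burger (take m ys)"
    using num_burgers_before_one_burger[of "take m ys"] by auto
  then show ?thesis
    by (rule hits_take)
qed

definition J_length :: "sym list \<Rightarrow> real" where
  "J_length ys =
    (if hits one_burger ys then real (length (reduce (rev (take (stop_time one_burger ys) ys)))) else 0)"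

definition Cnt_before_J :: "sym list \<Rightarrow> real" where
  "Cnt_before_J ys = (if hits one_burger ys then 0 else real_of_int (Cnt ys))"

text \<open>At \<open>J\<close> the reduced word has exactly one burger, so its count is \<open>2 - |X(-J,-1)|\<close>.\<close>

lemma Cnt_stopped_at_J:
  "real_of_int (Cnt (take (stop_time one_burger ys) ys)) =
    2 * of_bool (hits one_burger ys) - J_length ys + Cnt_before_J ys"
proof (cases "hits one_burger ys")
  case True
  then have "num_burgers (reduce (rev (take (stop_time one_burger ys) ys))) = 1"
    by (simp add: hits_iff_stop_time one_burger_def)
  with True show ?thesis
    using Cnt_eq_num_burgers_length[of "reduce (rev (take (stop_time one_burger ys) ys))"]
    by (simp add: J_length_def Cnt_before_J_def)
qed (simp add: J_length_def Cnt_before_J_def stop_time_not_hits)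

lemma hits_one_burger_le_J_length: "of_bool (hits one_burger ys) \<le> J_length ys"
proof (cases "hits one_burger ys")
  case True
  then have "num_burgers (reduce (rev (take (stop_time one_burger ys) ys))) = 1"
    by (simp add: hits_iff_stop_time one_burger_def)
  with True show ?thesis
    using length_eq_num_burgers_add_num_orders[of "reduce (rev (take (stop_time one_burger ys) ys))"]
    by (simp add: J_length_def)
qed (simp add: J_length_def)

lemma Cnt_before_J_nonpos: "Cnt_before_J ys \<le> 0"
  using num_burgers_before_one_burger[of ys] Cnt_eq_num_burgers_length[of "reduce (rev ys)"]
  by (simp add: Cnt_before_J_def)

lemma J_length_nonneg: "0 \<le> J_length ys"
  by (simp add: J_length_def)

lemma J_length_snoc: "J_length ys \<le> J_length (ys @ [x])"
  using stop_time_le_length[of one_burger ys]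
  by (simp add: J_length_def hits_snoc stop_time_snoc)

lemma Xred_eq_reduce_seq_prefix: "Xred \<omega> m = reduce (rev (seq_prefix \<omega> m))"
  by (simp add: Xred_def Xword_def seq_prefix_def)

lemma one_burger_seq_prefix:
  "one_burger (seq_prefix \<omega> m) \<longleftrightarrow> 0 < m \<and> num_burgers (Xred \<omega> m) = 1"
  by (auto simp: one_burger_def Xred_eq_reduce_seq_prefix seq_prefix_def)

lemma Jtime_eq_Least:
  "Jtime \<omega> = (if \<exists>m. one_burger (seq_prefix \<omega> m)
     then enat (LEAST m. one_burger (seq_prefix \<omega> m)) else \<infinity>)"
  by (simp add: Jtime_def one_burger_seq_prefix)

lemma Jtime_le_iff_hits: "Jtime \<omega> \<le> enat n \<longleftrightarrow> hits one_burger (seq_prefix \<omega> n)"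
proof
  assume "Jtime \<omega> \<le> enat n"
  then have "\<exists>m. one_burger (seq_prefix \<omega> m)" and "(LEAST m. one_burger (seq_prefix \<omega> m)) \<le> n"
    by (auto simp: Jtime_eq_Least split: if_splits)
  then show "hits one_burger (seq_prefix \<omega> n)"
    unfolding hits_seq_prefix by (meson LeastI_ex)
next
  assume "hits one_burger (seq_prefix \<omega> n)"
  then obtain m where "m \<le> n" "one_burger (seq_prefix \<omega> m)"
    by (auto simp: hits_seq_prefix)
  then show "Jtime \<omega> \<le> enat n"
    by (auto simp: Jtime_eq_Least intro: Least_le order_trans)
qed

lemma Jtime_eq_stop_time:
  "hits one_burger (seq_prefix \<omega> n) \<Longrightarrow> Jtime \<omega> = enat (stop_time one_burger (seq_prefix \<omega> n))"
  by (auto simp: Jtime_eq_Least stop_time_seq_prefix hits_seq_prefix)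

lemma J_length_seq_prefix:
  "J_length (seq_prefix \<omega> n) =
    (case Jtime \<omega> of enat m \<Rightarrow> if m \<le> n then real (length (Xred \<omega> m)) else 0 | \<infinity> \<Rightarrow> 0)"
proof (cases "hits one_burger (seq_prefix \<omega> n)")
  case True
  then show ?thesis
    using Jtime_eq_stop_time[OF True] stop_time_le_length[of one_burger "seq_prefix \<omega> n"]
    by (simp add: J_length_def take_seq_prefix Xred_eq_reduce_seq_prefix)
next
  case False
  then have "enat n < Jtime \<omega>"
    by (simp add: Jtime_le_iff_hits[symmetric] not_le)
  with False show ?thesis
    by (cases "Jtime \<omega>") (simp_all add: J_length_def)
qed

lemma Cnt_before_J_seq_prefix:
  "Cnt_before_J (seq_prefix \<omega> n) = real_of_int (Cnt (Xred \<omega> n)) * indicator {\<omega>. enat n < Jtime \<omega>} \<omega>"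
  by (simp add: Cnt_before_J_def Jtime_le_iff_hits[symmetric] Xred_eq_reduce_seq_prefix not_le)

lemma J_length_at_Jtime:
  "(case Jtime \<omega> of enat m \<Rightarrow> ennreal (real (length (Xred \<omega> m))) | \<infinity> \<Rightarrow> 0) =
    (SUP n. ennreal (J_length (seq_prefix \<omega> n)))"
proof (cases "Jtime \<omega>")
  case (enat m)
  have "ennreal (J_length (seq_prefix \<omega> m)) \<le> (SUP n. ennreal (J_length (seq_prefix \<omega> n)))"
    by (rule SUP_upper) simp
  then show ?thesis
    using enat by (intro antisym SUP_least) (simp_all add: J_length_seq_prefix)
qed (simp add: J_length_seq_prefix)

definition sym_alphabet :: "nat \<Rightarrow> sym set" where
  "sym_alphabet k = insert Fl (Bg ` {..<k} \<union> Od ` {..<k})"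

lemma finite_sym_alphabet [simp]: "finite (sym_alphabet k)"
  by (simp add: sym_alphabet_def)

lemma sum_sym_alphabet:
  "(\<Sum>s\<in>sym_alphabet k. f s) = f Fl + (\<Sum>i<k. f (Bg i)) + (\<Sum>i<k. f (Od i))"
proof -
  have "(\<Sum>s\<in>Bg ` {..<k} \<union> Od ` {..<k}. f s) = (\<Sum>s\<in>Bg ` {..<k}. f s) + (\<Sum>s\<in>Od ` {..<k}. f s)"
    by (rule sum.union_disjoint) auto
  moreover have "Fl \<notin> Bg ` {..<k} \<union> Od ` {..<k}"
    by auto
  ultimately show ?thesis
    by (simp add: sym_alphabet_def sum.reindex inj_on_def add.assoc)
qed

lemma sym_weight_outside: "s \<notin> sym_alphabet k \<Longrightarrow> sym_weight k p s = 0"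
  by (cases s) (auto simp: sym_weight_def sym_alphabet_def)

locale burger_model =
  fixes k :: nat and p :: real
  assumes k_pos: "0 < k" and p_nonneg: "0 \<le> p" and p_le_1: "p \<le> 1"
begin

lemma sym_weight_nonneg: "0 \<le> sym_weight k p s"
  using p_le_1 by (auto simp: sym_weight_def p_nonneg split: sym.split)

lemma sum_sym_weight:
  "(\<Sum>s\<in>sym_alphabet k. f s * sym_weight k p s) =
    p / 2 * f Fl + (\<Sum>i<k. f (Bg i)) / (2 * k) + (1 - p) * (\<Sum>i<k. f (Od i)) / (2 * k)"
  by (simp add: sum_sym_alphabet sym_weight_def sum_divide_distrib sum_distrib_left ac_simps)

lemma pmf_sym_pmf: "pmf (sym_pmf k p) s = sym_weight k p s"
proof -
  have "(\<integral>\<^sup>+s. ennreal (sym_weight k p s) \<partial>count_space UNIV) = (\<Sum>s\<in>sym_alphabet k. ennreal (sym_weight k p s))"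
    by (rule nn_integral_count_space') (auto simp: sym_weight_outside)
  also have "\<dots> = 1"
    using sum_sym_weight[of "\<lambda>_. 1"] k_pos by (simp add: sym_weight_nonneg field_simps)
  finally show ?thesis
    unfolding sym_pmf_def by (subst pmf_embed_pmf) (simp_all add: sym_weight_nonneg)
qed

lemma set_sym_pmf: "set_pmf (sym_pmf k p) \<subseteq> sym_alphabet k"
  using sym_weight_outside[of _ k p] by (metis pmf_sym_pmf set_pmf_iff subsetI)

lemma expectation_sym_pmf:
  "measure_pmf.expectation (sym_pmf k p) f =
    p / 2 * f Fl + (\<Sum>i<k. f (Bg i)) / (2 * k) + (1 - p) * (\<Sum>i<k. f (Od i)) / (2 * k)"
  using set_sym_pmf
  by (subst integral_measure_pmf_real[of "sym_alphabet k"])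
     (auto simp: pmf_sym_pmf sum_sym_weight)

sublocale pm1_walk "sym_pmf k p" burger_sign
proof
  show "finite (set_pmf (sym_pmf k p))"
    using set_sym_pmf by (rule finite_subset) simp
  show "burger_sign s = 1 \<or> burger_sign s = -1" for s
    by (simp add: burger_sign_def)
  show "measure_pmf.expectation (sym_pmf k p) (\<lambda>s. real_of_int (burger_sign s)) = 0"
    using k_pos by (simp add: expectation_sym_pmf burger_sign_def field_simps)
qed

lemma walk_eq_Cnt: "walk = Cnt"
  by (simp add: fun_eq_iff walk_def Cnt_eq_sum_list)

lemma chi_eq_SUP: "chi k p = (SUP n. ennreal (measure_pmf.expectation (replicate_pmf n (sym_pmf k p)) J_length))"
proof -
  have "chi k p = (\<integral>\<^sup>+\<omega>. (SUP n. ennreal (J_length (seq_prefix \<omega> n))) \<partial>Xspace k p)"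
    by (simp add: chi_def J_length_at_Jtime)
  also have "\<dots> = (SUP n. \<integral>\<^sup>+\<omega>. ennreal (J_length (seq_prefix \<omega> n)) \<partial>Xspace k p)"
  proof (rule nn_integral_monotone_convergence_SUP)
    show "incseq (\<lambda>n \<omega>. ennreal (J_length (seq_prefix \<omega> n)))"
      by (intro incseq_SucI le_funI) (simp add: seq_prefix_Suc J_length_snoc ennreal_leI)
    show "(\<lambda>\<omega>. ennreal (J_length (seq_prefix \<omega> n))) \<in> borel_measurable (Xspace k p)" for n
      using measurable_compose[OF measurable_seq_prefix[of n "sym_pmf k p"], of "\<lambda>ys. ennreal (J_length ys)" borel]
      by (simp add: Xspace_def)
  qed
  also have "\<dots> = (SUP n. ennreal (measure_pmf.expectation (replicate_pmf n (sym_pmf k p)) J_length))"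
  proof (rule SUP_cong[OF refl])
    fix n
    have "(\<integral>\<^sup>+\<omega>. ennreal (J_length (seq_prefix \<omega> n)) \<partial>Xspace k p) =
        (\<integral>\<^sup>+ys. ennreal (J_length ys) \<partial>replicate_pmf n (sym_pmf k p))"
      unfolding Xspace_def by (rule nn_integral_seq_prefix)
    then show "(\<integral>\<^sup>+\<omega>. ennreal (J_length (seq_prefix \<omega> n)) \<partial>Xspace k p) =
        ennreal (measure_pmf.expectation (replicate_pmf n (sym_pmf k p)) J_length)"
      by (simp add: nn_integral_eq_integral J_length_nonneg)
  qed
  finally show ?thesis .
qed

lemma integral_Cnt_before_J:
  "(\<integral>\<omega>. real_of_int (Cnt (Xred \<omega> n)) * indicator {\<omega>. Jtime \<omega> > enat n} \<omega> \<partial>Xspace k p) =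
    measure_pmf.expectation (replicate_pmf n (sym_pmf k p)) Cnt_before_J"
  unfolding Xspace_def Cnt_before_J_seq_prefix[symmetric] by (rule integral_seq_prefix)

lemma expectation_J_length:
  "measure_pmf.expectation (replicate_pmf n (sym_pmf k p)) J_length =
    2 * measure_pmf.prob (replicate_pmf n (sym_pmf k p)) {ys. hits one_burger ys}
    + measure_pmf.expectation (replicate_pmf n (sym_pmf k p)) Cnt_before_J"
proof -
  have "0 = measure_pmf.expectation (replicate_pmf n (sym_pmf k p))
      (\<lambda>ys. 2 * of_bool (hits one_burger ys) - J_length ys + Cnt_before_J ys)"
    using expectation_stopped_walk[of n one_burger]
    by (simp add: stopped_walk_def walk_eq_Cnt Cnt_stopped_at_J)
  then show ?thesis
    by (simp add: prob_eq_expectation_of_bool)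
qed

lemma incseq_expectation_J_length:
  "incseq (\<lambda>n. measure_pmf.expectation (replicate_pmf n (sym_pmf k p)) J_length)"
  by (intro incseq_SucI expectation_replicate_pmf_Suc_mono finite_support J_length_snoc)

lemma prob_hits_one_burger_tendsto:
  "(\<lambda>n. measure_pmf.prob (replicate_pmf n (sym_pmf k p)) {ys. hits one_burger ys}) \<longlonglongrightarrow> 1"
proof (rule tendsto_sandwich)
  show "eventually (\<lambda>n. measure_pmf.prob (replicate_pmf n (sym_pmf k p)) {ys. hits (\<lambda>zs. walk zs = 1) ys}
      \<le> measure_pmf.prob (replicate_pmf n (sym_pmf k p)) {ys. hits one_burger ys}) sequentially"
    by (intro always_eventually allI measure_pmf.finite_measure_mono)
       (auto simp: walk_eq_Cnt intro: hits_one_burger_if_hits_Cnt_one)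
  show "eventually (\<lambda>n. measure_pmf.prob (replicate_pmf n (sym_pmf k p)) {ys. hits one_burger ys}
      \<le> 1) sequentially"
    by (simp add: measure_pmf.prob_le_1)
qed (rule prob_hits_one_tendsto, rule tendsto_const)

lemma prob_hits_one_burger_le_expectation_J_length:
  "measure_pmf.prob (replicate_pmf n (sym_pmf k p)) {ys. hits one_burger ys} \<le>
    measure_pmf.expectation (replicate_pmf n (sym_pmf k p)) J_length"
  unfolding prob_eq_expectation_of_bool
  by (intro integral_mono hits_one_burger_le_J_length) simp_all

lemma expectation_Cnt_before_J_nonpos:
  "measure_pmf.expectation (replicate_pmf n (sym_pmf k p)) Cnt_before_J \<le> 0"
  using integral_mono[of _ Cnt_before_J "\<lambda>_. 0"] Cnt_before_J_nonpos by simp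

end

theorem mainTheorem4:
  fixes k :: nat and p :: real
  assumes "k \<ge> 2" and "0 \<le> p" and "p \<le> 1"
  shows "1 \<le> chi k p \<and> chi k p \<le> 2 \<and>
    (chi k p = 2 \<longleftrightarrow>
      (\<lambda>n. \<integral>\<omega>. real_of_int (Cnt (Xred \<omega> n)) * indicator {\<omega>. Jtime \<omega> > enat n} \<omega>
             \<partial>Xspace k p) \<longlonglongrightarrow> 0)"
proof -
  interpret burger_model k p
    using assms by unfold_locales auto
  show ?thesis
    unfolding chi_eq_SUP integral_Cnt_before_J
    by (rule SUP_ennreal_increasing_decomposition[OF incseq_expectation_J_length
          prob_hits_one_burger_tendsto expectation_J_length
          prob_hits_one_burger_le_expectation_J_length expectation_Cnt_before_J_nonpos])
qed

end
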